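(* Let $H$ be a graph and $G=H\odot K_1$. Then: (1) $G$ is $A$-AW for every integer $\ell\ge 2$; (2) if $G$ has $m$ edges and $n$ vertices, then $T_{V(G)}^{A(G)}(1)=\{2(m-n)\}$; (3) if $G$ is a forest with $c$ connected components, then $T_{V(G)}^{A(G)}(1)=\{-2c\}$.
   Context: All graphs are finite and simple. For a graph $H$, $H\odot K_1$ is the graph obtained from $H$ by adding, for each vertex $u$ of $H$, a new vertex adjacent only to $u$. Fix $\ell\ge 2$; labelings are maps $V(G)\to\mathbb{Z}_\ell$. In the adjacency Lights Out game, toggling a vertex $w$ adds $1$ (mod $\ell$) to the label of each vertex of the open neighborhood $N(w)$; the game is won when all labels are $0$; $G$ is $A$-AW if every labeling is winnable. For $U\subseteq V(G)$ and $r\in\mathbb{Z}_\ell$, $T_U^{A(G)}(r)\subseteq\mathbb{Z}_\ell$ is the set of all $t$ such that the adjacency game on $G$ starting from the labeling that is $r$ on $U$ and $0$ elsewhere can be won with the vertices of $U$ toggled a total of $t$ times (mod $\ell$). *)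

theory Defs
  imports Main
begin

definition simple_graph :: "'a set \<Rightarrow> ('a \<Rightarrow> 'a \<Rightarrow> bool) \<Rightarrow> bool" where
  "simple_graph V E \<longleftrightarrow> finite V \<and>
     (\<forall>u v. E u v \<longrightarrow> u \<in> V \<and> v \<in> V \<and> u \<noteq> v \<and> E v u)"

text \<open>Corona H with K1: vertex (u,False) is the copy of u, (u,True) is its new pendant vertex.\<close>
definition corona_V :: "'a set \<Rightarrow> ('a \<times> bool) set" where
  "corona_V V = V \<times> UNIV"

definition corona_E :: "'a set \<Rightarrow> ('a \<Rightarrow> 'a \<Rightarrow> bool) \<Rightarrow> ('a \<times> bool) \<Rightarrow> ('a \<times> bool) \<Rightarrow> bool" where
  "corona_E V E x y \<longleftrightarrow>
     (\<not> snd x \<and> \<not> snd y \<and> E (fst x) (fst y)) \<or>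
     (fst x = fst y \<and> fst x \<in> V \<and> snd x \<noteq> snd y)"

definition edges :: "'a set \<Rightarrow> ('a \<Rightarrow> 'a \<Rightarrow> bool) \<Rightarrow> 'a set set" where
  "edges V E = {{u, v} | u v. u \<in> V \<and> v \<in> V \<and> E u v}"

definition nbhd :: "'a set \<Rightarrow> ('a \<Rightarrow> 'a \<Rightarrow> bool) \<Rightarrow> 'a \<Rightarrow> 'a set" where
  "nbhd V E w = {v \<in> V. E w v}"

text \<open>Adjacency Lights Out over Z_l (l \<ge> 2), with Z_l represented by int modulo l.
  A toggle vector x gives the number of times each vertex is toggled; toggling w adds 1
  to every vertex of N(w).\<close>
definition wins :: "int \<Rightarrow> 'a set \<Rightarrow> ('a \<Rightarrow> 'a \<Rightarrow> bool) \<Rightarrow> ('a \<Rightarrow> int) \<Rightarrow> ('a \<Rightarrow> int) \<Rightarrow> bool" where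
  "wins l V E f x \<longleftrightarrow>
     (\<forall>v\<in>V. (f v + (\<Sum>w\<in>{w \<in> V. v \<in> nbhd V E w}. x w)) mod l = 0)"

definition winnable :: "int \<Rightarrow> 'a set \<Rightarrow> ('a \<Rightarrow> 'a \<Rightarrow> bool) \<Rightarrow> ('a \<Rightarrow> int) \<Rightarrow> bool" where
  "winnable l V E f \<longleftrightarrow> (\<exists>x. wins l V E f x)"

definition A_AW :: "int \<Rightarrow> 'a set \<Rightarrow> ('a \<Rightarrow> 'a \<Rightarrow> bool) \<Rightarrow> bool" where
  "A_AW l V E \<longleftrightarrow> (\<forall>f. winnable l V E f)"

text \<open>T_U^{A(G)}(r): the residues t in Z_l (represented in {0..<l}) such that the
  game from the labeling that is r on U and 0 elsewhere can be won with the vertices of U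
  toggled a total of t times (mod l).\<close>
definition T_set :: "int \<Rightarrow> 'a set \<Rightarrow> ('a \<Rightarrow> 'a \<Rightarrow> bool) \<Rightarrow> 'a set \<Rightarrow> int \<Rightarrow> int set" where
  "T_set l V E U r =
     {t. \<exists>x. wins l V E (\<lambda>v. if v \<in> U then r else 0) x \<and>
            t = (\<Sum>u\<in>U. x u) mod l}"

definition is_cycle :: "'a set \<Rightarrow> ('a \<Rightarrow> 'a \<Rightarrow> bool) \<Rightarrow> 'a list \<Rightarrow> bool" where
  "is_cycle V E cs \<longleftrightarrow> length cs \<ge> 3 \<and> distinct cs \<and> set cs \<subseteq> V \<and>
     (\<forall>i < length cs - 1. E (cs ! i) (cs ! Suc i)) \<and> E (last cs) (hd cs)"

definition forest :: "'a set \<Rightarrow> ('a \<Rightarrow> 'a \<Rightarrow> bool) \<Rightarrow> bool" where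
  "forest V E \<longleftrightarrow> \<not> (\<exists>cs. is_cycle V E cs)"

definition reach :: "'a set \<Rightarrow> ('a \<Rightarrow> 'a \<Rightarrow> bool) \<Rightarrow> ('a \<times> 'a) set" where
  "reach V E = {(u, v). u \<in> V \<and> v \<in> V \<and> (\<lambda>a b. E a b \<and> a \<in> V \<and> b \<in> V)\<^sup>*\<^sup>* u v}"

definition components :: "'a set \<Rightarrow> ('a \<Rightarrow> 'a \<Rightarrow> bool) \<Rightarrow> 'a set set" where
  "components V E = V // reach V E"

end

theory Submission
  imports Defs "HOL-Library.Transitive_Closure_Table"
begin

(* In the corona G = H o K1 the pendant (u,True) is adjacent only to the copy (u,False), so the
   label of (u,True) forces how often (u,False) is toggled, and then the label of (u,False)
   forces how often (u,True) is toggled. Hence every labeling is winnable, with toggles unique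
   modulo l. For the all-ones labeling the forced toggles sum to the sum over u in V(H) of
   deg_H u - 2, which the handshake lemma turns into 2(m - n), as G has |E(H)| + |V(H)| edges
   and 2|V(H)| vertices. Finally m + c = n for a forest, by deleting its edges one at a time:
   every edge of a forest is a bridge, so each deletion creates exactly one new component. *)

section \<open>Degrees and components\<close>

lemma simple_graphD:
  assumes "simple_graph V E" "E u v"
  shows "u \<in> V" "v \<in> V" "u \<noteq> v" "E v u"
  using assms unfolding simple_graph_def by blast+

lemma simple_graph_finite: "simple_graph V E \<Longrightarrow> finite V"
  unfolding simple_graph_def by blast

lemma finite_nbhd: "finite V \<Longrightarrow> finite (nbhd V E v)"
  unfolding nbhd_def by simp

lemma finite_edges: "finite V \<Longrightarrow> finite (edges V E)"
  by (rule finite_subset[of _ "Pow V"]) (auto simp: edges_def)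

lemma Collect_in_nbhd_eq_nbhd:
  assumes "simple_graph V E"
  shows "{w \<in> V. v \<in> nbhd V E w} = nbhd V E v"
  using simple_graphD[OF assms] unfolding nbhd_def by blast

lemma edges_containing_vertex:
  assumes "simple_graph V E" "v \<in> V"
  shows "{e \<in> edges V E. v \<in> e} = (\<lambda>w. {v, w}) ` nbhd V E v"
  using simple_graphD[OF assms(1)] assms(2) unfolding edges_def nbhd_def by blast

lemma handshake:
  assumes G: "simple_graph V E"
  shows "(\<Sum>v\<in>V. card (nbhd V E v)) = 2 * card (edges V E)"
proof -
  have fin: "finite V" by (rule simple_graph_finite[OF G])
  have "card {v \<in> V. v \<in> e} = 2" if "e \<in> edges V E" for e
  proof -
    obtain a b where "e = {a, b}" "a \<in> V" "b \<in> V" "E a b"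
      using \<open>e \<in> edges V E\<close> unfolding edges_def by blast
    moreover have "a \<noteq> b" using simple_graphD(3)[OF G \<open>E a b\<close>] .
    moreover have "{v \<in> V. v \<in> e} = e" using \<open>e \<in> edges V E\<close> unfolding edges_def by blast
    ultimately show ?thesis by simp
  qed
  then have "(\<Sum>v\<in>V. card {e \<in> edges V E. v \<in> e}) = 2 * card (edges V E)"
    using fin finite_edges[OF fin] by (intro sum_multicount) blast+
  moreover have "card {e \<in> edges V E. v \<in> e} = card (nbhd V E v)" if "v \<in> V" for v
    unfolding edges_containing_vertex[OF G that] by (rule card_image) (auto simp: inj_on_def doubleton_eq_iff)
  ultimately show ?thesis by simp
qed

lemma equiv_reach:
  assumes G: "simple_graph V E"
  shows "equiv V (reach V E)"
proof -
  let ?R = "\<lambda>a b. E a b \<and> a \<in> V \<and> b \<in> V"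
  have "symp ?R" using simple_graphD(4)[OF G] by (auto intro: sympI)
  then have sym: "symp ?R\<^sup>*\<^sup>*" by (rule symp_rtranclp)
  show ?thesis
  proof (rule equivI)
    show "sym (reach V E)" unfolding reach_def sym_def using sympD[OF sym] by blast
    show "trans (reach V E)" unfolding reach_def trans_def by (auto intro: rtranclp_trans)
  qed (auto simp: reach_def refl_on_def)
qed

lemma reach_mono:
  assumes "\<And>a b. E' a b \<Longrightarrow> E a b"
  shows "reach V E' \<subseteq> reach V E"
  unfolding reach_def by (auto elim: rtranclp_mono[THEN predicate2D, rotated] simp: assms)

definition delete_edge :: "'a \<Rightarrow> 'a \<Rightarrow> ('a \<Rightarrow> 'a \<Rightarrow> bool) \<Rightarrow> 'a \<Rightarrow> 'a \<Rightarrow> bool" where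
  "delete_edge u v E a b \<longleftrightarrow> E a b \<and> {a, b} \<noteq> {u, v}"

lemma simple_graph_delete_edge: "simple_graph V E \<Longrightarrow> simple_graph V (delete_edge u v E)"
  unfolding simple_graph_def delete_edge_def by (metis insert_commute)

lemma forest_delete_edge: "forest V E \<Longrightarrow> forest V (delete_edge u v E)"
  unfolding forest_def is_cycle_def delete_edge_def by blast

lemma edges_delete_edge: "edges V (delete_edge u v E) = edges V E - {{u, v}}"
  unfolding edges_def delete_edge_def by blast

lemma reach_delete_edge:
  assumes G: "simple_graph V E" and uv: "E u v"
  defines "R \<equiv> reach V (delete_edge u v E)"
  defines "C \<equiv> R``{u} \<union> R``{v}"
  shows "reach V E = R \<union> C \<times> C"
proof -
  have R: "equiv V R" unfolding R_def by (rule equiv_reach[OF simple_graph_delete_edge[OF G]])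
  have P: "equiv V (reach V E)" by (rule equiv_reach[OF G])
  have V: "u \<in> V" "v \<in> V" using simple_graphD[OF G uv] by auto
  have uvC: "u \<in> C" "v \<in> C" unfolding C_def using equiv_class_self[OF R] V by auto
  have C_closed: "x \<in> C \<longleftrightarrow> y \<in> C" if "(x, y) \<in> R" for x y
    using that R unfolding C_def equiv_def sym_def trans_def by blast
  have "(x, y) \<in> R \<union> C \<times> C" if "(x, y) \<in> reach V E" for x y
  proof -
    from that have "x \<in> V" and "(\<lambda>a b. E a b \<and> a \<in> V \<and> b \<in> V)\<^sup>*\<^sup>* x y"
      unfolding reach_def by auto
    from this(2) show ?thesis
    proof (induction rule: rtranclp_induct)
      case base
      show ?case using R \<open>x \<in> V\<close> unfolding equiv_def refl_on_def by blast
    next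
      case (step b c)
      show ?case
      proof (cases "{b, c} = {u, v}")
        case True
        then have "b \<in> C" "c \<in> C" using uvC by (auto simp: doubleton_eq_iff)
        then show ?thesis using step.IH C_closed by blast
      next
        case False
        then have "(b, c) \<in> R" using step.hyps(2) unfolding R_def reach_def delete_edge_def by auto
        then show ?thesis using step.IH C_closed R unfolding equiv_def trans_def by blast
      qed
    qed
  qed
  moreover have "R \<subseteq> reach V E"
    unfolding R_def by (rule reach_mono) (simp add: delete_edge_def)
  moreover have "(u, c) \<in> reach V E" if "c \<in> C" for c
  proof -
    have "(u, v) \<in> reach V E" using uv V unfolding reach_def by auto
    then show ?thesis
      using that \<open>R \<subseteq> reach V E\<close> P unfolding C_def equiv_def trans_def by blast
  qed
  then have "C \<times> C \<subseteq> reach V E" using P unfolding equiv_def sym_def trans_def by blast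
  ultimately show ?thesis by auto
qed

lemma card_quotient_merge_classes:
  assumes R: "equiv A R" and fin: "finite A" and a: "a \<in> A" and b: "b \<in> A" and ab: "(a, b) \<notin> R"
  defines "C \<equiv> R``{a} \<union> R``{b}"
  shows "card (A // (R \<union> C \<times> C)) + 1 = card (A // R)"
proof -
  have in_C_iff: "x \<in> C \<longleftrightarrow> R``{x} \<in> {R``{a}, R``{b}}" if "x \<in> A" for x
    using eq_equiv_class_iff[OF R a that] eq_equiv_class_iff[OF R b that] unfolding C_def by auto
  have merged_class: "(R \<union> C \<times> C)``{x} = (if x \<in> C then C else R``{x})" if "x \<in> A" for x
  proof -
    have "(R \<union> C \<times> C)``{x} = R``{x} \<union> (if x \<in> C then C else {})" by auto
    then show ?thesis using in_C_iff[OF that] unfolding C_def by auto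
  qed
  have ab_classes: "R``{a} \<noteq> R``{b}" using eq_equiv_class_iff[OF R a b] ab by simp
  have C_not_class: "C \<notin> A // R"
  proof
    assume "C \<in> A // R"
    then obtain x where x: "x \<in> A" "C = R``{x}" by (rule quotientE)
    have "a \<in> C" "b \<in> C" unfolding C_def using equiv_class_self[OF R] a b by auto
    then have "(x, a) \<in> R" "(x, b) \<in> R" using x by auto
    then show False using ab R unfolding equiv_def sym_def trans_def by blast
  qed
  have "A // (R \<union> C \<times> C) = insert C (A // R - {R``{a}, R``{b}})"
  proof (rule set_eqI)
    fix X
    show "X \<in> A // (R \<union> C \<times> C) \<longleftrightarrow> X \<in> insert C (A // R - {R``{a}, R``{b}})"
    proof
      assume "X \<in> A // (R \<union> C \<times> C)"
      then obtain x where "x \<in> A" "X = (R \<union> C \<times> C)``{x}" by (rule quotientE)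
      then show "X \<in> insert C (A // R - {R``{a}, R``{b}})"
        using merged_class in_C_iff quotientI[of x A R] by auto
    next
      assume X: "X \<in> insert C (A // R - {R``{a}, R``{b}})"
      show "X \<in> A // (R \<union> C \<times> C)"
      proof (cases "X = C")
        case True
        then show ?thesis using merged_class[OF a] quotientI[OF a] unfolding C_def
          by (metis UnI1 equiv_class_self[OF R a])
      next
        case False
        with X have "X \<in> A // R" and X_other: "X \<notin> {R``{a}, R``{b}}" by simp_all
        from \<open>X \<in> A // R\<close> obtain x where x: "x \<in> A" "X = R``{x}" by (rule quotientE)
        then have "X = (R \<union> C \<times> C)``{x}" using merged_class in_C_iff X_other by simp
        then show ?thesis using quotientI[OF x(1)] by simp
      qed
    qed
  qed
  moreover have "finite (A // R)" by (rule finite_quotient[OF fin equiv_type[OF R]])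
  moreover have "{R``{a}, R``{b}} \<subseteq> A // R" using quotientI[OF a] quotientI[OF b] by simp
  moreover have "card {R``{a}, R``{b}} = 2" using ab_classes by simp
  ultimately show ?thesis
    using C_not_class card_mono[of "A // R" "{R``{a}, R``{b}}"] by (simp add: card_Diff_subset)
qed

lemma forest_not_reach_delete_edge:
  assumes G: "simple_graph V E" and F: "forest V E" and uv: "E u v"
  shows "(u, v) \<notin> reach V (delete_edge u v E)"
proof
  let ?R = "\<lambda>a b. delete_edge u v E a b \<and> a \<in> V \<and> b \<in> V"
  assume "(u, v) \<in> reach V (delete_edge u v E)"
  then obtain xs where "rtrancl_path ?R u xs v"
    unfolding reach_def by (auto simp: rtranclp_eq_rtrancl_path)
  then obtain ys where path: "rtrancl_path ?R u ys v" and dist: "distinct (u # ys)"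
    by (rule rtrancl_path_distinct)
  have V: "u \<in> V" "v \<in> V" "u \<noteq> v" using simple_graphD[OF G uv] by auto
  have steps: "E ((u # ys) ! i) ((u # ys) ! Suc i)" if "i < length ys" for i
    using rtrancl_path_nth[OF path that] by (simp add: delete_edge_def)
  have "ys \<noteq> []" using path V(3) by (auto elim: rtrancl_path.cases)
  then have last: "last (u # ys) = v" using rtrancl_path_last[OF path] by simp
  have "ys \<noteq> [v]"
  proof
    assume "ys = [v]"
    then have "?R u v" using rtrancl_path_nth[OF path, of 0] by simp
    then show False by (simp add: delete_edge_def)
  qed
  with \<open>ys \<noteq> []\<close> last have "length (u # ys) \<ge> 3"
    by (cases ys rule: rev_cases) (auto simp: Suc_le_eq)
  moreover have "set ys \<subseteq> V" using rtrancl_path_Range[OF path] by blast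
  ultimately have "is_cycle V E (u # ys)"
    unfolding is_cycle_def using dist V steps last simple_graphD(4)[OF G uv] by auto
  then show False using F unfolding forest_def by blast
qed

lemma card_components_delete_bridge:
  assumes G: "simple_graph V E" and uv: "E u v"
    and bridge: "(u, v) \<notin> reach V (delete_edge u v E)"
  shows "card (components V E) + 1 = card (components V (delete_edge u v E))"
  using card_quotient_merge_classes[OF equiv_reach[OF simple_graph_delete_edge[OF G]]
      simple_graph_finite[OF G] _ _ bridge] simple_graphD[OF G uv]
  unfolding components_def reach_delete_edge[OF G uv] by simp

lemma card_components_edgeless:
  assumes "edges V E = {}"
  shows "card (components V E) = card V"
proof -
  have "\<not> (E a b \<and> a \<in> V \<and> b \<in> V)" for a b
    using assms unfolding edges_def by blast
  then have "reach V E = Id_on V"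
    unfolding reach_def by (auto simp: Id_on_def elim: converse_rtranclpE)
  then have "components V E = (\<lambda>v. {v}) ` V"
    unfolding components_def quotient_def by auto
  then show ?thesis by (simp add: card_image)
qed

lemma forest_card_edges_components:
  assumes "simple_graph V E" and "forest V E"
  shows "card (edges V E) + card (components V E) = card V"
  using assms
proof (induction "card (edges V E)" arbitrary: E)
  case 0
  then have "edges V E = {}"
    using finite_edges[OF simple_graph_finite[OF 0(2)]] by simp
  then show ?case using card_components_edgeless by simp
next
  case (Suc n)
  then have "edges V E \<noteq> {}" by auto
  then obtain u v where uv: "E u v" "{u, v} \<in> edges V E"
    unfolding edges_def by blast
  have "card (edges V (delete_edge u v E)) = n"
    using Suc.hyps(2) uv(2) finite_edges[OF simple_graph_finite[OF Suc.prems(1)]]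
    by (simp add: edges_delete_edge)
  moreover have "card (edges V (delete_edge u v E)) + card (components V (delete_edge u v E)) = card V"
    using Suc.hyps(1) calculation simple_graph_delete_edge[OF Suc.prems(1)]
      forest_delete_edge[OF Suc.prems(2)] by metis
  moreover have "card (components V E) + 1 = card (components V (delete_edge u v E))"
    using card_components_delete_bridge[OF Suc.prems(1) uv(1)]
      forest_not_reach_delete_edge[OF Suc.prems uv(1)] by blast
  ultimately show ?case using Suc.hyps(2) by simp
qed

section \<open>Lights Out on the corona\<close>

lemma wins_iff_nbhd:
  assumes "simple_graph V E"
  shows "wins l V E f x \<longleftrightarrow> (\<forall>v\<in>V. (f v + (\<Sum>w\<in>nbhd V E v. x w)) mod l = 0)"
  unfolding wins_def Collect_in_nbhd_eq_nbhd[OF assms] ..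

lemma simple_graph_corona: "simple_graph V E \<Longrightarrow> simple_graph (corona_V V) (corona_E V E)"
  unfolding simple_graph_def corona_V_def corona_E_def by auto

lemma nbhd_corona_copy:
  assumes "simple_graph V E" "u \<in> V"
  shows "nbhd (corona_V V) (corona_E V E) (u, False) = insert (u, True) ((\<lambda>w. (w, False)) ` nbhd V E u)"
  using assms simple_graphD[OF assms(1)] unfolding nbhd_def corona_V_def corona_E_def by auto

lemma nbhd_corona_pendant:
  assumes "u \<in> V"
  shows "nbhd (corona_V V) (corona_E V E) (u, True) = {(u, False)}"
  using assms unfolding nbhd_def corona_V_def corona_E_def by auto

lemma sum_nbhd_corona_copy:
  assumes "simple_graph V E" "u \<in> V"
  shows "(\<Sum>w\<in>nbhd (corona_V V) (corona_E V E) (u, False). x w)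
    = x (u, True) + (\<Sum>w\<in>nbhd V E u. x (w, False))"
  unfolding nbhd_corona_copy[OF assms]
  using finite_nbhd[OF simple_graph_finite[OF assms(1)]]
  by (simp add: sum.reindex inj_on_def image_iff)

lemma sum_corona_V:
  "(\<Sum>p\<in>corona_V V. g p) = (\<Sum>u\<in>V. g (u, False) + g (u, True))"
  unfolding corona_V_def sum.cartesian_product' by (simp add: UNIV_bool add.commute)

lemma ball_corona_V: "(\<forall>p\<in>corona_V V. P p) \<longleftrightarrow> (\<forall>u\<in>V. P (u, False) \<and> P (u, True))"
  unfolding corona_V_def by (metis (full_types) SigmaE SigmaI UNIV_I)

lemma card_corona_V: "card (corona_V V) = 2 * card V"
  unfolding corona_V_def by (simp add: card_cartesian_product)

lemma wins_corona_iff: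
  assumes G: "simple_graph V E"
  shows "wins l (corona_V V) (corona_E V E) f x \<longleftrightarrow>
    (\<forall>u\<in>V. (f (u, True) + x (u, False)) mod l = 0 \<and>
           (f (u, False) + x (u, True) + (\<Sum>w\<in>nbhd V E u. x (w, False))) mod l = 0)"
  unfolding wins_iff_nbhd[OF simple_graph_corona[OF G]] ball_corona_V by (auto simp: nbhd_corona_pendant sum_nbhd_corona_copy[OF G] add.assoc)

fun corona_toggles :: "'a set \<Rightarrow> ('a \<Rightarrow> 'a \<Rightarrow> bool) \<Rightarrow> ('a \<times> bool \<Rightarrow> int) \<Rightarrow> 'a \<times> bool \<Rightarrow> int" where
  "corona_toggles V E f (u, False) = - f (u, True)"
| "corona_toggles V E f (u, True) = (\<Sum>w\<in>nbhd V E u. f (w, True)) - f (u, False)"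

lemma wins_corona_toggles:
  assumes "simple_graph V E"
  shows "wins l (corona_V V) (corona_E V E) f (corona_toggles V E f)"
  unfolding wins_corona_iff[OF assms] by (simp add: sum_negf)

lemma wins_corona_unique:
  assumes G: "simple_graph V E" and win: "wins l (corona_V V) (corona_E V E) f x"
    and p: "p \<in> corona_V V"
  shows "x p mod l = corona_toggles V E f p mod l"
proof -
  have copy: "l dvd x (u, False) + f (u, True)" if "u \<in> V" for u
    using win that unfolding wins_corona_iff[OF G] by (simp add: mod_eq_0_iff_dvd add.commute)
  have pendant: "l dvd x (u, True) - corona_toggles V E f (u, True)" if u: "u \<in> V" for u
  proof -
    have copy_eq: "l dvd f (u, False) + x (u, True) + (\<Sum>w\<in>nbhd V E u. x (w, False))"
      using win u unfolding wins_corona_iff[OF G] by (simp add: mod_eq_0_iff_dvd)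
    have pendant_eqs: "l dvd (\<Sum>w\<in>nbhd V E u. x (w, False) + f (w, True))"
      by (rule dvd_sum) (simp add: copy nbhd_def)
    have split: "x (u, True) - corona_toggles V E f (u, True)
      = (f (u, False) + x (u, True) + (\<Sum>w\<in>nbhd V E u. x (w, False)))
        - (\<Sum>w\<in>nbhd V E u. x (w, False) + f (w, True))"
      by (simp add: sum.distrib)
    show ?thesis unfolding split by (rule dvd_diff[OF copy_eq pendant_eqs])
  qed
  obtain u b where "p = (u, b)" "u \<in> V" using p unfolding corona_V_def by auto
  then show ?thesis
    using copy pendant by (cases b) (simp_all add: mod_eq_dvd_iff)
qed

lemma T_set_corona:
  fixes r :: int
  assumes G: "simple_graph V E" and U: "U \<subseteq> corona_V V"
  defines "f \<equiv> \<lambda>v. if v \<in> U then r else 0"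
  shows "T_set l (corona_V V) (corona_E V E) U r = {(\<Sum>p\<in>U. corona_toggles V E f p) mod l}"
proof (rule set_eqI)
  fix t
  show "t \<in> T_set l (corona_V V) (corona_E V E) U r \<longleftrightarrow> t \<in> {(\<Sum>p\<in>U. corona_toggles V E f p) mod l}"
  proof
    assume "t \<in> T_set l (corona_V V) (corona_E V E) U r"
    then obtain x where win: "wins l (corona_V V) (corona_E V E) f x" and t: "t = (\<Sum>p\<in>U. x p) mod l"
      unfolding T_set_def f_def by blast
    have "t = (\<Sum>p\<in>U. x p mod l) mod l" unfolding t by (rule mod_sum_eq[symmetric])
    also have "(\<Sum>p\<in>U. x p mod l) = (\<Sum>p\<in>U. corona_toggles V E f p mod l)"
      using wins_corona_unique[OF G win] U by (intro sum.cong) auto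
    also have "(\<Sum>p\<in>U. corona_toggles V E f p mod l) mod l = (\<Sum>p\<in>U. corona_toggles V E f p) mod l"
      by (rule mod_sum_eq)
    finally show "t \<in> {(\<Sum>p\<in>U. corona_toggles V E f p) mod l}" by simp
  next
    assume "t \<in> {(\<Sum>p\<in>U. corona_toggles V E f p) mod l}"
    then show "t \<in> T_set l (corona_V V) (corona_E V E) U r"
      using wins_corona_toggles[OF G] unfolding T_set_def f_def by blast
  qed
qed

lemma card_edges_corona:
  assumes G: "simple_graph V E"
  shows "card (edges (corona_V V) (corona_E V E)) = card (edges V E) + card V"
proof -
  have deg_copy: "card (nbhd (corona_V V) (corona_E V E) (u, False)) = card (nbhd V E u) + 1"
    if "u \<in> V" for u
    unfolding nbhd_corona_copy[OF G that]
    using finite_nbhd[OF simple_graph_finite[OF G]]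
    by (simp add: card_image inj_on_def image_iff)
  have "2 * card (edges (corona_V V) (corona_E V E))
      = (\<Sum>p\<in>corona_V V. card (nbhd (corona_V V) (corona_E V E) p))"
    by (rule handshake[OF simple_graph_corona[OF G], symmetric])
  also have "\<dots> = (\<Sum>u\<in>V. card (nbhd V E u) + 2)"
    unfolding sum_corona_V by (rule sum.cong) (simp_all add: deg_copy nbhd_corona_pendant)
  also have "\<dots> = 2 * card (edges V E) + 2 * card V"
    by (subst sum.distrib) (simp add: handshake[OF G])
  finally show ?thesis by simp
qed

lemma sum_corona_toggles_all_ones:
  assumes G: "simple_graph V E"
  defines "GV \<equiv> corona_V V" and "GE \<equiv> corona_E V E"
  shows "(\<Sum>p\<in>GV. corona_toggles V E (\<lambda>v. if v \<in> GV then 1 else 0) p)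
    = 2 * (int (card (edges GV GE)) - int (card GV))"
proof -
  have "(\<Sum>w\<in>nbhd V E u. if (w, True) \<in> GV then 1 else 0) = int (card (nbhd V E u))" for u
    unfolding GV_def corona_V_def nbhd_def by simp
  then have "(\<Sum>p\<in>GV. corona_toggles V E (\<lambda>v. if v \<in> GV then 1 else 0) p)
      = (\<Sum>u\<in>V. int (card (nbhd V E u)) - 2)"
    unfolding GV_def sum_corona_V by (intro sum.cong) (simp_all add: corona_V_def)
  also have "\<dots> = 2 * int (card (edges V E)) - 2 * int (card V)"
    using arg_cong[OF handshake[OF G], of int] by (simp add: sum_subtractf)
  finally show ?thesis
    unfolding GV_def GE_def card_edges_corona[OF G] card_corona_V by simp
qed

theorem lemma3p9:
  fixes V :: "'a set" and E :: "'a \<Rightarrow> 'a \<Rightarrow> bool"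
  assumes "simple_graph V E"
  defines "GV \<equiv> corona_V V" and "GE \<equiv> corona_E V E"
  shows "(\<forall>l::int. l \<ge> 2 \<longrightarrow> A_AW l GV GE)
    \<and> (\<forall>l::int. l \<ge> 2 \<longrightarrow>
         T_set l GV GE GV 1 = {(2 * (int (card (edges GV GE)) - int (card GV))) mod l})
    \<and> (forest GV GE \<longrightarrow> (\<forall>l::int. l \<ge> 2 \<longrightarrow>
         T_set l GV GE GV 1 = {(- 2 * int (card (components GV GE))) mod l}))"
proof -
  have winnable: "A_AW l GV GE" for l
    unfolding A_AW_def winnable_def GV_def GE_def using wins_corona_toggles[OF assms(1)] by blast
  have T: "T_set l GV GE GV 1 = {(2 * (int (card (edges GV GE)) - int (card GV))) mod l}" for l
    using T_set_corona[OF assms(1) subset_refl, of l 1] sum_corona_toggles_all_ones[OF assms(1)]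
    unfolding GV_def GE_def by simp
  have "2 * (int (card (edges GV GE)) - int (card GV)) = - 2 * int (card (components GV GE))"
    if "forest GV GE"
  proof -
    have "card (edges GV GE) + card (components GV GE) = card GV"
      using forest_card_edges_components simple_graph_corona[OF assms(1)] that
      unfolding GV_def GE_def by blast
    then have "int (card (edges GV GE)) + int (card (components GV GE)) = int (card GV)"
      by (metis of_nat_add)
    then show ?thesis by (simp add: algebra_simps)
  qed
  then show ?thesis using winnable T by simp
qed

end
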